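(* Let $\Gamma$ be a Deza graph with parameters $(n,k,k-1,a)$, $k>1$, $\beta=1$. For any $NA$-vertex $x$, the vertex $x'$ is an $NA$-vertex.
   Context: A Deza graph with parameters $(n,k,b,a)$, $a\le b$, is a $k$-regular graph on $n$ vertices in which any two distinct vertices have $a$ or $b$ common neighbours; $\beta$ is the number of vertices $u\ne v$ with exactly $b$ common neighbours with a given vertex $v$. Since $\beta=1$, for each vertex $x$ let $x_b$ denote the unique vertex having $b=k-1$ common neighbours with $x$. A vertex $x$ is an $A$-vertex if $x$ is adjacent to $x_b$, and an $NA$-vertex otherwise. For an $NA$-vertex $x$, $x'$ denotes the unique neighbour of $x$ not adjacent to $x_b$. *)

theory Defs
  imports Main
begin

definition nbrs :: "'a set \<Rightarrow> ('a \<Rightarrow> 'a \<Rightarrow> bool) \<Rightarrow> 'a \<Rightarrow> 'a set" where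
  "nbrs V E x = {y \<in> V. E x y}"

definition common_nbrs :: "'a set \<Rightarrow> ('a \<Rightarrow> 'a \<Rightarrow> bool) \<Rightarrow> 'a \<Rightarrow> 'a \<Rightarrow> 'a set" where
  "common_nbrs V E x y = {z \<in> V. E x z \<and> E y z}"

definition simple_graph :: "'a set \<Rightarrow> ('a \<Rightarrow> 'a \<Rightarrow> bool) \<Rightarrow> bool" where
  "simple_graph V E \<longleftrightarrow> finite V \<and> (\<forall>x y. E x y \<longrightarrow> x \<in> V \<and> y \<in> V)
     \<and> (\<forall>x y. E x y \<longrightarrow> E y x) \<and> (\<forall>x. \<not> E x x)"

definition deza_graph :: "'a set \<Rightarrow> ('a \<Rightarrow> 'a \<Rightarrow> bool) \<Rightarrow> nat \<Rightarrow> nat \<Rightarrow> nat \<Rightarrow> nat \<Rightarrow> bool" where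
  "deza_graph V E n k b a \<longleftrightarrow> simple_graph V E \<and> card V = n \<and> a \<le> b
     \<and> (\<forall>x\<in>V. card (nbrs V E x) = k)
     \<and> (\<forall>x\<in>V. \<forall>y\<in>V. x \<noteq> y \<longrightarrow>
           card (common_nbrs V E x y) = a \<or> card (common_nbrs V E x y) = b)"

definition deza_beta :: "'a set \<Rightarrow> ('a \<Rightarrow> 'a \<Rightarrow> bool) \<Rightarrow> nat \<Rightarrow> 'a \<Rightarrow> nat" where
  "deza_beta V E b v = card {u \<in> V. u \<noteq> v \<and> card (common_nbrs V E u v) = b}"

definition b_vertex :: "'a set \<Rightarrow> ('a \<Rightarrow> 'a \<Rightarrow> bool) \<Rightarrow> nat \<Rightarrow> 'a \<Rightarrow> 'a" where
  "b_vertex V E b x = (THE u. u \<in> V \<and> u \<noteq> x \<and> card (common_nbrs V E x u) = b)"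

definition A_vertex :: "'a set \<Rightarrow> ('a \<Rightarrow> 'a \<Rightarrow> bool) \<Rightarrow> nat \<Rightarrow> 'a \<Rightarrow> bool" where
  "A_vertex V E b x \<longleftrightarrow> x \<in> V \<and> E x (b_vertex V E b x)"

definition NA_vertex :: "'a set \<Rightarrow> ('a \<Rightarrow> 'a \<Rightarrow> bool) \<Rightarrow> nat \<Rightarrow> 'a \<Rightarrow> bool" where
  "NA_vertex V E b x \<longleftrightarrow> x \<in> V \<and> \<not> E x (b_vertex V E b x)"

definition prime_vertex :: "'a set \<Rightarrow> ('a \<Rightarrow> 'a \<Rightarrow> bool) \<Rightarrow> nat \<Rightarrow> 'a \<Rightarrow> 'a" where
  "prime_vertex V E b x = (THE y. y \<in> V \<and> E x y \<and> \<not> E y (b_vertex V E b x))"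

end

theory Submission
  imports Defs
begin

text \<open>In a k-regular graph two adjacent vertices with k - 1 common neighbours are twins: each
neighbour of one, other than the other, is a neighbour of both. Suppose x' were an A-vertex,
so x' and z = x'_b are adjacent twins. Since the b-relation is symmetric and x' \<noteq> x_b, we have
z \<noteq> x; so x, a neighbour of x', is adjacent to z. Then z is a neighbour of x other than x', hence
adjacent to x_b, and so x_b, a neighbour of z, is adjacent to x', contradicting the choice of x'.\<close>

lemma common_nbrs_commute: "common_nbrs V E x y = common_nbrs V E y x"
  unfolding common_nbrs_def by auto

lemma nbrs_eq_insert_common_nbrs:
  assumes sg: "simple_graph V E" and deg: "\<forall>w\<in>V. card (nbrs V E w) = k"
    and uv: "E u v" and common: "card (common_nbrs V E u v) = k - 1"
  shows "nbrs V E v = insert u (common_nbrs V E u v)"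
proof (rule card_subset_eq[symmetric])
  have fin: "finite V" and sym: "\<And>x y. E x y \<Longrightarrow> E y x" and irrefl: "\<And>x. \<not> E x x"
    and inV: "\<And>x y. E x y \<Longrightarrow> x \<in> V \<and> y \<in> V"
    using sg unfolding simple_graph_def by auto
  show "finite (nbrs V E v)" using fin unfolding nbrs_def by auto
  show sub: "insert u (common_nbrs V E u v) \<subseteq> nbrs V E v"
    using uv inV sym unfolding common_nbrs_def nbrs_def by auto
  have "u \<notin> common_nbrs V E u v" using irrefl unfolding common_nbrs_def by auto
  moreover have "finite (common_nbrs V E u v)" using fin unfolding common_nbrs_def by auto
  moreover have "card (nbrs V E v) = k" using deg uv inV by blast
  moreover have "k > 0"
    using sub \<open>finite (nbrs V E v)\<close> \<open>card (nbrs V E v) = k\<close> by (auto simp: card_gt_0_iff)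
  ultimately show "card (insert u (common_nbrs V E u v)) = card (nbrs V E v)"
    using common by simp
qed

lemma adjacent_if_nbr_of_twin:
  assumes sg: "simple_graph V E" and deg: "\<forall>w\<in>V. card (nbrs V E w) = k"
    and uv: "E u v" and common: "card (common_nbrs V E u v) = k - 1"
    and vw: "E v w" and "w \<noteq> u"
  shows "E u w"
proof -
  have "w \<in> nbrs V E v"
    using sg vw unfolding simple_graph_def nbrs_def by auto
  with \<open>w \<noteq> u\<close> have "w \<in> common_nbrs V E u v"
    using nbrs_eq_insert_common_nbrs[OF sg deg uv common] by simp
  then show ?thesis unfolding common_nbrs_def by simp
qed

lemma b_vertex_iff:
  assumes "deza_beta V E b x = 1"
  shows "u \<in> V \<and> u \<noteq> x \<and> card (common_nbrs V E x u) = b \<longleftrightarrow> u = b_vertex V E b x"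
proof -
  obtain u0 where u0: "{u \<in> V. u \<noteq> x \<and> card (common_nbrs V E u x) = b} = {u0}"
    using assms unfolding deza_beta_def by (rule card_1_singletonE)
  then have P: "u \<in> V \<and> u \<noteq> x \<and> card (common_nbrs V E x u) = b \<longleftrightarrow> u = u0" for u
    by (auto simp: common_nbrs_commute set_eq_iff)
  then have "b_vertex V E b x = u0"
    unfolding b_vertex_def by blast
  with P show ?thesis by simp
qed

lemma b_vertex_b_vertex:
  assumes beta: "\<forall>v\<in>V. deza_beta V E b v = 1" and x: "x \<in> V"
  shows "b_vertex V E b (b_vertex V E b x) = x"
proof -
  define y where "y = b_vertex V E b x"
  have "y \<in> V" "y \<noteq> x" "card (common_nbrs V E x y) = b"
    using b_vertex_iff[of V E b x y] beta x y_def by auto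
  then show ?thesis
    using b_vertex_iff[of V E b y x] beta x y_def by (simp add: common_nbrs_commute)
qed

lemma prime_vertex_iff:
  assumes sg: "simple_graph V E" and deg: "card (nbrs V E x) = k" and "k > 0"
    and common: "card (common_nbrs V E x (b_vertex V E b x)) = k - 1"
  shows "w \<in> V \<and> E x w \<and> \<not> E w (b_vertex V E b x) \<longleftrightarrow> w = prime_vertex V E b x"
proof -
  define y where "y = b_vertex V E b x"
  have fin: "finite V" and sym: "\<And>x y. E x y \<Longrightarrow> E y x"
    using sg unfolding simple_graph_def by auto
  have sub: "common_nbrs V E x y \<subseteq> nbrs V E x"
    unfolding common_nbrs_def nbrs_def by auto
  moreover have "finite (nbrs V E x)" using fin unfolding nbrs_def by auto
  ultimately have "card (nbrs V E x - common_nbrs V E x y) = 1"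
    using card_Diff_subset[OF finite_subset[OF sub] sub] deg common \<open>k > 0\<close> y_def by simp
  then obtain w0 where w0: "nbrs V E x - common_nbrs V E x y = {w0}"
    by (rule card_1_singletonE)
  have P: "w \<in> V \<and> E x w \<and> \<not> E w y \<longleftrightarrow> w = w0" for w
    using w0 sym unfolding nbrs_def common_nbrs_def set_eq_iff by blast
  then have "prime_vertex V E b x = w0"
    unfolding prime_vertex_def y_def[symmetric] by blast
  with P show ?thesis unfolding y_def by simp
qed

lemma adjacent_via_twin:
  assumes sg: "simple_graph V E" and deg: "\<forall>w\<in>V. card (nbrs V E w) = k"
    and "E x x'" and "\<not> E x y" and other_nbrs: "\<forall>w\<in>V. E x w \<and> w \<noteq> x' \<longrightarrow> E w y"
    and "E x' z" and twin: "card (common_nbrs V E x' z) = k - 1" and "z \<noteq> x"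
  shows "E x' y"
proof -
  have sym: "\<And>u v. E u v \<Longrightarrow> E v u" and irrefl: "\<And>u. \<not> E u u"
    and inV: "\<And>u v. E u v \<Longrightarrow> u \<in> V \<and> v \<in> V"
    using sg unfolding simple_graph_def by auto
  have "card (common_nbrs V E z x') = k - 1"
    using twin by (simp add: common_nbrs_commute)
  then have "E z x"
    using adjacent_if_nbr_of_twin[OF sg deg sym[OF \<open>E x' z\<close>]] sym \<open>E x x'\<close> \<open>z \<noteq> x\<close> by blast
  moreover have "z \<noteq> x'" using \<open>E x' z\<close> irrefl by auto
  ultimately have "E z y" using other_nbrs inV sym by blast
  moreover have "y \<noteq> x'" using \<open>E x x'\<close> \<open>\<not> E x y\<close> by auto
  ultimately show "E x' y"
    using adjacent_if_nbr_of_twin[OF sg deg \<open>E x' z\<close> twin] by blast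
qed

theorem lemma9:
  fixes V :: "'a set" and E :: "'a \<Rightarrow> 'a \<Rightarrow> bool" and n k a :: nat and x :: 'a
  assumes "deza_graph V E n k (k - 1) a"
    and "k > 1"
    and "\<forall>v\<in>V. deza_beta V E (k - 1) v = 1"
    and "NA_vertex V E (k - 1) x"
  shows "NA_vertex V E (k - 1) (prime_vertex V E (k - 1) x)"
proof -
  define y x' z where "y = b_vertex V E (k - 1) x" and "x' = prime_vertex V E (k - 1) x"
    and "z = b_vertex V E (k - 1) x'"
  have sg: "simple_graph V E" and deg: "\<forall>w\<in>V. card (nbrs V E w) = k"
    using assms(1) unfolding deza_graph_def by auto
  note b_vertex = b_vertex_iff[OF assms(3)[rule_format]]
  have x: "x \<in> V" "\<not> E x y" using assms(4) unfolding NA_vertex_def y_def by auto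
  then have "card (common_nbrs V E x y) = k - 1"
    using b_vertex[of x y] y_def by auto
  moreover have "card (nbrs V E x) = k" "k > 0" using deg x(1) assms(2) by auto
  ultimately have x'_iff: "w \<in> V \<and> E x w \<and> \<not> E w y \<longleftrightarrow> w = x'" for w
    using prime_vertex_iff[OF sg] unfolding x'_def y_def by blast
  have x': "x' \<in> V" "E x x'" "\<not> E x' y" using x'_iff[of x'] by simp_all
  have other_nbrs: "\<forall>w\<in>V. E x w \<and> w \<noteq> x' \<longrightarrow> E w y" using x'_iff by blast
  have z: "card (common_nbrs V E x' z) = k - 1"
    using b_vertex[of x' z] x'(1) z_def by auto
  have "z \<noteq> x"
    using b_vertex_b_vertex[OF assms(3) x'(1)] x(2) x'(2) unfolding y_def z_def by metis
  then have "\<not> E x' z"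
    using adjacent_via_twin[OF sg deg x'(2) x(2) other_nbrs _ z] x'(3) by blast
  with x'(1) show ?thesis unfolding NA_vertex_def z_def x'_def by simp
qed

end
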